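(* Assume there is $\delta>0$ such that $\alpha\big(\{((p_i)_{i\in\mathbb N_0},h)\in\Omega: p_1=1\}\big)<1$ and $\alpha\big(\{((p_i)_{i\in\mathbb N_0},h)\in\Omega: p_0\le 1-\delta,\ h\in[\delta,1-\delta]\}\big)=1$, and assume $M<\infty$. Then for every $\varepsilon>0$ there is $\gamma>0$ such that for all $n\in\mathbb N$, $$\tfrac1n\log E_\omega[\eta_n(y)]\le\log(\Lambda+\varepsilon)\quad\text{for }\mathsf P\text{-a.e. }\omega,$$ for all $y\in n[0,\gamma]\cap\mathbb N_0$.
   Context: Let $\mathcal M$ be the set of probability measures $(p_i)_{i\in\mathbb N_0}$ on $\mathbb N_0$ (offspring distributions) and $\Omega=\mathcal M\times(0,1]$. Let $\alpha$ be a probability measure on $\Omega$. A random environment $\omega=(\omega_x)_{x\in\mathbb N_0}=(\mu_x,h_x)_{x\in\mathbb N_0}$ is an i.i.d. sequence with law $\alpha$; write $\mathsf P=\alpha^{\otimes\mathbb N_0}$. Let $m_x=\sum_{k\ge0}k\,\mu_x(\{k\})$, $M=\operatorname{ess\,sup} m_0$ and $\Lambda=\operatorname{ess\,sup}\big(m_0(1-h_0)\big)$. Given $\omega$, the branching random walk in random environment on $\mathbb N_0$ evolves in discrete time as follows: at each time step every existing particle at a site $x$ produces offspring according to $\mu_x$, independently of all other particles, and dies; then every newly produced particle independently moves from $x$ to $x+1$ with probability $h_x$ and stays at $x$ with probability $1-h_x$. The process starts with one particle at $0$. Let $\eta_n(x)$ be the number of particles at $x$ at time $n$; $E_\omega$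 denotes quenched expectation. Here $n[0,\gamma]=\{ny:y\in[0,\gamma]\}$. *)

theory Defs
  imports "HOL-Probability.Probability"
begin

text \<open>A point of the environment space: an offspring distribution given by its
  weights p = (p_i)_i (a function nat => real) together with the drift parameter h.\<close>
type_synonym site_env = "(nat \<Rightarrow> real) \<times> real"

definition Omega :: "site_env set" where
  "Omega = {(p, h). (\<forall>i. 0 \<le> p i) \<and> p sums 1 \<and> 0 < h \<and> h \<le> 1}"

definition mean_off :: "(nat \<Rightarrow> real) \<Rightarrow> ennreal" where
  "mean_off p = (\<Sum>k. ennreal (real k * p k))"

text \<open>M = ess sup m_0 and Lambda = ess sup m_0 (1 - h_0), w.r.t. alpha.\<close>
definition Mbound :: "site_env measure \<Rightarrow> ennreal" where
  "Mbound \<alpha> = esssup \<alpha> (\<lambda>w. mean_off (fst w))"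

definition Lam :: "site_env measure \<Rightarrow> ennreal" where
  "Lam \<alpha> = esssup \<alpha> (\<lambda>w. mean_off (fst w) * ennreal (1 - snd w))"

definition offspring :: "site_env \<Rightarrow> nat pmf" where
  "offspring w = embed_pmf (fst w)"

fun displace :: "real \<Rightarrow> nat \<Rightarrow> nat \<Rightarrow> nat multiset pmf" where
  "displace h x 0 = return_pmf {#}"
| "displace h x (Suc k) =
     bind_pmf (bernoulli_pmf h)
       (\<lambda>b. map_pmf (add_mset (if b then Suc x else x)) (displace h x k))"

definition particle_step :: "(nat \<Rightarrow> site_env) \<Rightarrow> nat \<Rightarrow> nat multiset pmf" where
  "particle_step \<omega> x =
     bind_pmf (offspring (\<omega> x)) (\<lambda>k. displace (snd (\<omega> x)) x k)"

text \<open>One time step of the whole population (configuration = multiset of sites);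
  all particles act independently.\<close>
definition pop_step :: "(nat \<Rightarrow> site_env) \<Rightarrow> nat multiset \<Rightarrow> nat multiset pmf" where
  "pop_step \<omega> C =
     foldr (\<lambda>x acc. bind_pmf (particle_step \<omega> x) (\<lambda>A. map_pmf ((+) A) acc))
       (sorted_list_of_multiset C) (return_pmf {#})"

primrec config :: "(nat \<Rightarrow> site_env) \<Rightarrow> nat \<Rightarrow> nat multiset pmf" where
  "config \<omega> 0 = return_pmf {#0#}"
| "config \<omega> (Suc n) = bind_pmf (config \<omega> n) (pop_step \<omega>)"

text \<open>Quenched expectation E_omega[eta_n(y)].\<close>
definition mean_eta :: "(nat \<Rightarrow> site_env) \<Rightarrow> nat \<Rightarrow> nat \<Rightarrow> ennreal" where
  "mean_eta \<omega> n y = (\<integral>\<^sup>+ C. of_nat (count C y) \<partial>measure_pmf (config \<omega> n))"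

end

theory Submission
  imports Defs
begin

text \<open>The expected occupation numbers \<open>m\<^sub>n(y) = E\<^sub>\<omega>[\<eta>\<^sub>n(y)]\<close> obey the linear recursion
  \<open>m\<^sub>n\<^sub>+\<^sub>1(y) = m(y)(1 - h(y)) m\<^sub>n(y) + m(y-1) h(y-1) m\<^sub>n(y-1)\<close>, whose coefficients are almost surely
  bounded by \<open>\<Lambda>\<close> and \<open>M\<close>. Tilting by \<open>t\<^sup>y\<close> turns it into \<open>t\<^sup>y m\<^sub>n(y) \<le> (\<Lambda> + M t)\<^sup>n\<close>. Taking \<open>t\<close> so small
  that \<open>M t \<le> \<epsilon>/2\<close> and \<open>\<gamma>\<close> with \<open>t\<^sup>-\<^sup>\<gamma> = (\<Lambda> + \<epsilon>)/(\<Lambda> + \<epsilon>/2)\<close> gives \<open>m\<^sub>n(y) \<le> (\<Lambda> + \<epsilon>)\<^sup>n\<close> for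
  \<open>y \<le> \<gamma> n\<close>.\<close>

lemma nn_integral_bernoulli_pmf_ennreal:
  assumes "0 \<le> h" "h \<le> 1"
  shows "(\<integral>\<^sup>+b. f b \<partial>measure_pmf (bernoulli_pmf h)) = f True * ennreal h + f False * ennreal (1 - h)"
  using assms by (subst nn_integral_measure_pmf_support[where A=UNIV]) (auto simp: UNIV_bool)

lemma nn_integral_count_displace:
  assumes "0 \<le> h" "h \<le> 1"
  shows "(\<integral>\<^sup>+D. of_nat (count D y) \<partial>measure_pmf (displace h x k))
    = of_nat k * ((if y = x then ennreal (1 - h) else 0) + (if y = Suc x then ennreal h else 0))"
proof (induction k)
  case 0
  then show ?case by simp
next
  case (Suc k)
  let ?m = "(if y = x then ennreal (1 - h) else 0) + (if y = Suc x then ennreal h else 0)"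
  have "(\<integral>\<^sup>+D. of_nat (count (add_mset z D) y) \<partial>measure_pmf (displace h x k))
      = of_nat (if y = z then 1 else 0) + of_nat k * ?m" for z
  proof -
    have "(\<integral>\<^sup>+D. of_nat (count (add_mset z D) y) \<partial>measure_pmf (displace h x k))
        = (\<integral>\<^sup>+D. of_nat (if y = z then 1 else 0) + of_nat (count D y) \<partial>measure_pmf (displace h x k))"
      by (intro nn_integral_cong) auto
    also have "\<dots> = of_nat (if y = z then 1 else 0) + of_nat k * ?m"
      by (subst nn_integral_add) (auto simp: Suc measure_pmf.emeasure_space_1)
    finally show ?thesis .
  qed
  moreover have "ennreal h + ennreal (1 - h) = 1"
    using assms by (simp flip: ennreal_plus)
  ultimately show ?case
    using assms
    by (simp add: nn_integral_bernoulli_pmf_ennreal distrib_left distrib_right)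
       (metis distrib_left mult.right_neutral)
qed

lemma nn_integral_offspring:
  assumes "(p, h) \<in> Omega"
  shows "(\<integral>\<^sup>+k. of_nat k \<partial>measure_pmf (offspring (p, h))) = mean_off p"
proof -
  have nonneg: "\<And>i. 0 \<le> p i" and sums: "p sums 1"
    using assms by (auto simp: Omega_def)
  have "(\<integral>\<^sup>+i. ennreal (p i) \<partial>count_space UNIV) = (\<Sum>i. ennreal (p i))"
    by (rule nn_integral_count_space_nat)
  also have "\<dots> = 1"
    using nonneg sums by (simp add: suminf_ennreal2 sums_iff)
  finally have "pmf (offspring (p, h)) = p"
    using nonneg by (intro ext) (simp add: offspring_def pmf_embed_pmf)
  then have "(\<integral>\<^sup>+k. of_nat k \<partial>measure_pmf (offspring (p, h)))
      = (\<Sum>k. ennreal (p k) * of_nat k)"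
    by (simp add: nn_integral_measure_pmf nn_integral_count_space_nat)
  then show ?thesis
    by (simp add: mean_off_def ennreal_mult' mult.commute ennreal_of_nat_eq_real_of_nat)
qed

definition stay_mean :: "site_env \<Rightarrow> ennreal" where
  "stay_mean w = mean_off (fst w) * ennreal (1 - snd w)"

definition jump_mean :: "site_env \<Rightarrow> ennreal" where
  "jump_mean w = mean_off (fst w) * ennreal (snd w)"

lemma nn_integral_count_particle_step:
  assumes "\<omega> x \<in> Omega"
  shows "(\<integral>\<^sup>+D. of_nat (count D y) \<partial>measure_pmf (particle_step \<omega> x))
    = (if y = x then stay_mean (\<omega> x) else 0) + (if y = Suc x then jump_mean (\<omega> x) else 0)"
proof -
  obtain p h where w: "\<omega> x = (p, h)" by fastforce
  have h: "0 \<le> h" "h \<le> 1" using assms w by (auto simp: Omega_def)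
  have "(\<integral>\<^sup>+D. of_nat (count D y) \<partial>measure_pmf (particle_step \<omega> x))
      = (\<integral>\<^sup>+k. of_nat k \<partial>measure_pmf (offspring (p, h)))
          * ((if y = x then ennreal (1 - h) else 0) + (if y = Suc x then ennreal h else 0))"
    by (simp add: particle_step_def w nn_integral_count_displace[OF h] nn_integral_multc)
  then show ?thesis
    using assms by (simp add: w nn_integral_offspring stay_mean_def jump_mean_def distrib_left)
qed

lemma nn_integral_count_foldr_union:
  fixes f :: "'a \<Rightarrow> 'b multiset pmf"
  shows "(\<integral>\<^sup>+D. of_nat (count D y) \<partial>measure_pmf
      (foldr (\<lambda>x acc. bind_pmf (f x) (\<lambda>A. map_pmf ((+) A) acc)) xs (return_pmf {#})))
    = (\<Sum>x\<leftarrow>xs. \<integral>\<^sup>+D. of_nat (count D y) \<partial>measure_pmf (f x))"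
proof (induction xs)
  case Nil
  then show ?case by simp
next
  case (Cons x xs)
  let ?acc = "foldr (\<lambda>x acc. bind_pmf (f x) (\<lambda>A. map_pmf ((+) A) acc)) xs (return_pmf {#})"
  have "(\<integral>\<^sup>+D. of_nat (count D y) \<partial>measure_pmf
      (foldr (\<lambda>x acc. bind_pmf (f x) (\<lambda>A. map_pmf ((+) A) acc)) (x # xs) (return_pmf {#})))
      = (\<integral>\<^sup>+A. (\<integral>\<^sup>+B. of_nat (count A y) + of_nat (count B y) \<partial>measure_pmf ?acc) \<partial>measure_pmf (f x))"
    by (simp only: foldr.simps o_def nn_integral_bind_pmf nn_integral_map_pmf count_union of_nat_add)
  also have "\<dots> = (\<integral>\<^sup>+A. of_nat (count A y) + (\<integral>\<^sup>+B. of_nat (count B y) \<partial>measure_pmf ?acc) \<partial>measure_pmf (f x))"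
    by (intro nn_integral_cong, subst nn_integral_add) (simp_all add: measure_pmf.emeasure_space_1)
  also have "\<dots> = (\<integral>\<^sup>+A. of_nat (count A y) \<partial>measure_pmf (f x)) + (\<integral>\<^sup>+B. of_nat (count B y) \<partial>measure_pmf ?acc)"
    by (subst nn_integral_add) (simp_all add: measure_pmf.emeasure_space_1)
  finally show ?case
    using Cons.IH by simp
qed

lemma nn_integral_count_pop_step:
  "(\<integral>\<^sup>+D. of_nat (count D y) \<partial>measure_pmf (pop_step \<omega> C))
    = (\<Sum>x\<in>#C. \<integral>\<^sup>+D. of_nat (count D y) \<partial>measure_pmf (particle_step \<omega> x))"
proof -
  have "(\<Sum>x\<leftarrow>sorted_list_of_multiset C. g x) = (\<Sum>x\<in>#C. g x)" for g :: "nat \<Rightarrow> ennreal"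
    by (metis mset_map mset_sorted_list_of_multiset sum_mset_sum_list)
  then show ?thesis
    unfolding pop_step_def nn_integral_count_foldr_union .
qed

lemma mean_eta_0: "mean_eta \<omega> 0 y = (if y = 0 then 1 else 0)"
  by (simp add: mean_eta_def)

lemma mean_eta_Suc:
  assumes "\<And>x. \<omega> x \<in> Omega"
  shows "mean_eta \<omega> (Suc n) y = stay_mean (\<omega> y) * mean_eta \<omega> n y
    + (case y of 0 \<Rightarrow> 0 | Suc z \<Rightarrow> jump_mean (\<omega> z) * mean_eta \<omega> n z)"
proof -
  have "(\<Sum>x\<in>#C. (if y = x then stay_mean (\<omega> x) else 0) + (if y = Suc x then jump_mean (\<omega> x) else 0))
      = stay_mean (\<omega> y) * of_nat (count C y)
        + (case y of 0 \<Rightarrow> 0 | Suc z \<Rightarrow> jump_mean (\<omega> z) * of_nat (count C z))" for C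
    by (induction C) (auto simp: distrib_left split: nat.split)
  then show ?thesis
    by (cases y) (simp_all add: mean_eta_def nn_integral_count_pop_step
        nn_integral_count_particle_step[OF assms] nn_integral_add nn_integral_cmult)
qed

lemma mean_eta_tilted_le:
  assumes "\<And>x. \<omega> x \<in> Omega" "\<And>x. stay_mean (\<omega> x) \<le> L" "\<And>x. jump_mean (\<omega> x) \<le> J"
    and "t \<le> 1"
  shows "t ^ y * mean_eta \<omega> n y \<le> (L + J * t) ^ n"
proof (induction n arbitrary: y)
  case 0
  have "t ^ y \<le> 1"
    using \<open>t \<le> 1\<close> by (intro power_le_one) auto
  then show ?case by (simp add: mean_eta_0)
next
  case (Suc n)
  show ?case
  proof (cases y)
    case 0
    have "t ^ y * mean_eta \<omega> (Suc n) y = stay_mean (\<omega> 0) * (t ^ 0 * mean_eta \<omega> n 0)"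
      using 0 by (simp add: mean_eta_Suc[OF assms(1)])
    also have "\<dots> \<le> L * (L + J * t) ^ n"
      by (intro mult_mono assms(2) Suc.IH) auto
    also have "\<dots> \<le> (L + J * t) * (L + J * t) ^ n"
      by (intro mult_right_mono) auto
    finally show ?thesis by simp
  next
    case (Suc z)
    have "t ^ y * mean_eta \<omega> (Suc n) y
        = stay_mean (\<omega> y) * (t ^ y * mean_eta \<omega> n y) + jump_mean (\<omega> z) * t * (t ^ z * mean_eta \<omega> n z)"
      using Suc by (simp add: mean_eta_Suc[OF assms(1)] algebra_simps)
    also have "\<dots> \<le> L * (L + J * t) ^ n + J * t * (L + J * t) ^ n"
      by (intro add_mono mult_mono assms(2,3) Suc.IH) auto
    finally show ?thesis by (simp add: algebra_simps)
  qed
qed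

lemma tilting_parameters:
  fixes L M \<epsilon> :: real
  assumes "0 \<le> L" "0 \<le> M" "0 < \<epsilon>"
  obtains t \<gamma> where "0 < t" "t \<le> 1" "M * t \<le> \<epsilon> / 2" "0 < \<gamma>"
    "\<And>n y. real y \<le> real n * \<gamma> \<Longrightarrow> (L + \<epsilon> / 2) ^ n \<le> t ^ y * (L + \<epsilon>) ^ n"
proof
  define t where "t = min (1/2) (\<epsilon> / (2 * (M + 1)))"
  define c where "c = (L + \<epsilon>) / (L + \<epsilon> / 2)"
  define \<gamma> where "\<gamma> = ln c / ln (1 / t)"
  show t: "0 < t" "t \<le> 1"
    using assms by (auto simp: t_def)
  have "M * t \<le> (M + 1) * (\<epsilon> / (2 * (M + 1)))"
    using assms t by (intro mult_mono) (auto simp: t_def)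
  also have "\<dots> = \<epsilon> / 2"
    using assms by (simp add: field_simps)
  finally show "M * t \<le> \<epsilon> / 2" .
  have c: "1 < c" and ln_t: "0 < ln (1 / t)"
    using assms by (auto simp: c_def t_def field_simps)
  then show "0 < \<gamma>"
    by (simp add: \<gamma>_def)
  have "t powr \<gamma> = 1 / c"
    using t ln_t c by (simp add: powr_def \<gamma>_def ln_div exp_minus inverse_eq_divide)
  fix n y assume y: "real y \<le> real n * \<gamma>"
  have "(1 / c) ^ n = (t powr \<gamma>) ^ n"
    using \<open>t powr \<gamma> = 1 / c\<close> by simp
  also have "\<dots> = t powr (real n * \<gamma>)"
    using t by (simp add: powr_realpow[symmetric] powr_powr mult.commute)
  also have "\<dots> \<le> t ^ y"
    using y t by (simp add: powr_mono' flip: powr_realpow)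
  finally have "(L + \<epsilon> / 2) ^ n \<le> (L + \<epsilon> / 2) ^ n * c ^ n * t ^ y"
    using assms c by (simp add: field_simps power_one_over)
  also have "(L + \<epsilon> / 2) ^ n * c ^ n = (L + \<epsilon>) ^ n"
    using assms by (simp add: c_def flip: power_mult_distrib)
  finally show "(L + \<epsilon> / 2) ^ n \<le> t ^ y * (L + \<epsilon>) ^ n"
    by (simp add: mult.commute)
qed

lemma mean_eta_le_exponential:
  fixes L M \<epsilon> :: real
  assumes "0 \<le> L" "0 \<le> M" "0 < \<epsilon>"
  obtains \<gamma> where "0 < \<gamma>"
    "\<And>\<omega> n y. \<forall>x. \<omega> x \<in> Omega \<and> stay_mean (\<omega> x) \<le> ennreal L \<and> jump_mean (\<omega> x) \<le> ennreal M
      \<Longrightarrow> real y \<le> real n * \<gamma> \<Longrightarrow> mean_eta \<omega> n y \<le> (ennreal L + ennreal \<epsilon>) ^ n"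
proof -
  obtain t \<gamma> where t: "0 < t" "t \<le> 1" "M * t \<le> \<epsilon> / 2" and "0 < \<gamma>"
    and tilt: "\<And>n y. real y \<le> real n * \<gamma> \<Longrightarrow> (L + \<epsilon> / 2) ^ n \<le> t ^ y * (L + \<epsilon>) ^ n"
    using tilting_parameters[OF assms] by blast
  have "mean_eta \<omega> n y \<le> (ennreal L + ennreal \<epsilon>) ^ n"
    if env: "\<forall>x. \<omega> x \<in> Omega \<and> stay_mean (\<omega> x) \<le> ennreal L \<and> jump_mean (\<omega> x) \<le> ennreal M"
      and y: "real y \<le> real n * \<gamma>" for \<omega> n y
  proof -
    have "ennreal t ^ y * mean_eta \<omega> n y \<le> (ennreal L + ennreal M * ennreal t) ^ n"
      using env t by (intro mean_eta_tilted_le) auto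
    also have "ennreal L + ennreal M * ennreal t = ennreal (L + M * t)"
      using assms t by (simp add: ennreal_plus ennreal_mult)
    also have "\<dots> ^ n = ennreal ((L + M * t) ^ n)"
      using assms t by (intro ennreal_power) simp
    also have "\<dots> \<le> ennreal ((L + \<epsilon> / 2) ^ n)"
      using assms t by (intro ennreal_leI power_mono) auto
    also have "\<dots> \<le> ennreal (t ^ y * (L + \<epsilon>) ^ n)"
      using tilt[OF y] by (rule ennreal_leI)
    also have "\<dots> = ennreal t ^ y * (ennreal L + ennreal \<epsilon>) ^ n"
      using assms t by (simp add: ennreal_mult flip: ennreal_power)
    finally show ?thesis
      using t(1) by (simp add: ennreal_mult_le_mult_iff power_eq_top_ennreal)
  qed
  with \<open>0 < \<gamma>\<close> that show ?thesis by blast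
qed

lemma AE_site_env_bounds:
  assumes "prob_space \<alpha>" "emeasure \<alpha> Omega = 1"
  shows "AE w in \<alpha>. w \<in> Omega \<and> stay_mean w \<le> Lam \<alpha> \<and> jump_mean w \<le> Mbound \<alpha>"
proof -
  interpret prob_space \<alpha> by fact
  have "Omega \<in> sets \<alpha>"
    using assms(2) emeasure_notin_sets by force
  then have "AE w in \<alpha>. w \<in> Omega"
    using assms(2) by (simp add: AE_in_set_eq_1 emeasure_eq_measure)
  moreover have "AE w in \<alpha>. mean_off (fst w) \<le> Mbound \<alpha>"
    unfolding Mbound_def by (rule esssup_AE)
  moreover have "AE w in \<alpha>. stay_mean w \<le> Lam \<alpha>"
    unfolding Lam_def stay_mean_def by (rule esssup_AE)
  ultimately show ?thesis
  proof eventually_elim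
    case (elim w)
    then have "jump_mean w \<le> mean_off (fst w) * 1"
      unfolding jump_mean_def by (intro mult_left_mono) (auto simp: Omega_def split: prod.splits)
    with elim show ?case by simp
  qed
qed

lemma AE_PiM_all_coordinates:
  assumes "prob_space M" "AE w in M. P w"
  shows "AE \<omega> in PiM UNIV (\<lambda>_::nat. M). \<forall>x. P (\<omega> x)"
  unfolding AE_all_countable using assms by (blast intro: AE_PiM_component)

theorem lemma1:
  fixes \<alpha> :: "site_env measure" and \<delta> :: real
  assumes "prob_space \<alpha>"
    and "sets \<alpha> = sets borel"
    and "emeasure \<alpha> Omega = 1"
    and "\<delta> > 0"
    and "measure \<alpha> {w \<in> Omega. fst w 1 = 1} < 1"
    and "emeasure \<alpha> {w \<in> Omega. fst w 0 \<le> 1 - \<delta> \<and> \<delta> \<le> snd w \<and> snd w \<le> 1 - \<delta>} = 1"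
    and "Mbound \<alpha> < \<infinity>"
  shows "\<forall>\<epsilon>>0. \<exists>\<gamma>>0. \<forall>n::nat. n \<ge> 1 \<longrightarrow>
           (AE \<omega> in PiM UNIV (\<lambda>_. \<alpha>). \<forall>y::nat. real y \<le> real n * \<gamma> \<longrightarrow>
               mean_eta \<omega> n y \<le> (Lam \<alpha> + ennreal \<epsilon>) ^ n)"
proof (intro allI impI)
  fix \<epsilon> :: real assume "\<epsilon> > 0"
  show "\<exists>\<gamma>>0. \<forall>n::nat. n \<ge> 1 \<longrightarrow>
           (AE \<omega> in PiM UNIV (\<lambda>_. \<alpha>). \<forall>y::nat. real y \<le> real n * \<gamma> \<longrightarrow>
               mean_eta \<omega> n y \<le> (Lam \<alpha> + ennreal \<epsilon>) ^ n)"
  proof (cases "Lam \<alpha> = \<top>")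
    case True
    then show ?thesis
      by (intro exI[of _ 1]) (auto simp: power_eq_top_ennreal)
  next
    case False
    then obtain L where L: "Lam \<alpha> = ennreal L" "0 \<le> L"
      by (cases "Lam \<alpha>") auto
    obtain M where M: "Mbound \<alpha> = ennreal M" "0 \<le> M"
      using assms(7) by (cases "Mbound \<alpha>") auto
    obtain \<gamma> where "0 < \<gamma>" and bound:
      "\<And>\<omega> n y. \<forall>x. \<omega> x \<in> Omega \<and> stay_mean (\<omega> x) \<le> Lam \<alpha> \<and> jump_mean (\<omega> x) \<le> Mbound \<alpha>
        \<Longrightarrow> real y \<le> real n * \<gamma> \<Longrightarrow> mean_eta \<omega> n y \<le> (Lam \<alpha> + ennreal \<epsilon>) ^ n"
      using mean_eta_le_exponential[OF L(2) M(2) \<open>\<epsilon> > 0\<close>] unfolding L(1) M(1) by blast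
    have "AE \<omega> in PiM UNIV (\<lambda>_. \<alpha>). \<forall>x::nat. \<omega> x \<in> Omega \<and> stay_mean (\<omega> x) \<le> Lam \<alpha>
        \<and> jump_mean (\<omega> x) \<le> Mbound \<alpha>"
      by (rule AE_PiM_all_coordinates[OF assms(1) AE_site_env_bounds[OF assms(1,3)]])
    then show ?thesis
      using \<open>0 < \<gamma>\<close> by (intro exI[of _ \<gamma>]) (auto elim!: eventually_mono intro: bound)
  qed
qed

end
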